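(* Let $M^*$ be any maximum-weight perfect matching of $G$, and for $b\in B$ let $M^*(b)$ be the item matched to $b$. Then for any agents $i,j$ and any $c\in[m-1]$, $v_{i,M^*(b_{(i,c)})}\ge v_{i,M^*(b_{(j,c+1)})}$ (dummy items having value $0$ for every agent).
   Context: Setting: $n$ agents, $m$ real items $\mathcal M$, restricted additive valuations: there are values $v(g)>0$ with $v_{i,g}\in\{0,v(g)\}$ and $v_i(S)=\sum_{g\in S}v_{i,g}$; every real item is valued positively by at least one agent. Let $u_1>u_2>\dots>u_t$ be the distinct values in $\{v(g):g\in\mathcal M\}$ and $\mathcal M_f=\{g:v(g)=u_f\}$. Add a set $\mathcal M_d$ of $mn-m$ dummy items valued $0$ by all agents. The bipartite graph $G$ has left side $A=\{a_g: g\in\mathcal M\cup\mathcal M_d\}$ ($mn$ vertices) and right side $B=\{b_{(i,c)}: i\in[n], c\in[m]\}$; the set $\mathcal N_c=\{b_{(i,c)}:i\in[n]\}$ is called bucket $c$. Edges: for each real $g\in\mathcal M_f$, each agent $i$ with $v_{i,g}>0$ and each $c\in[m]$, an edge $(a_g,b_{(i,c)})$ of weight $-m^{t-f}\cdot c$; for each dummy $g$ and all $i,c$, an edge $(a_g,b_{(i,c)})$ of weight $0$; no other edges. *)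

theory Defs
  imports Complex_Main 
begin

(* Items (left vertices a_g identified with g): real items are 0..<m,
   dummy items are m..<m*n (there are m*n - m of them).
   Right vertices b_(i,c) are pairs (i,c). *)

definition agents :: "nat \<Rightarrow> nat set" where
  "agents n = {1..n}"

definition buckets :: "nat \<Rightarrow> nat set" where
  "buckets m = {1..m}"

definition real_items :: "nat \<Rightarrow> nat set" where
  "real_items m = {..<m}"

definition dummy_items :: "nat \<Rightarrow> nat \<Rightarrow> nat set" where
  "dummy_items n m = {m..<m*n}"

definition left_side :: "nat \<Rightarrow> nat \<Rightarrow> nat set" where
  "left_side n m = real_items m \<union> dummy_items n m"

definition right_side :: "nat \<Rightarrow> nat \<Rightarrow> (nat \<times> nat) set" where
  "right_side n m = agents n \<times> buckets m"

definition num_values :: "(nat \<Rightarrow> real) \<Rightarrow> nat \<Rightarrow> nat" where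
  "num_values v m = card (v ` real_items m)"

(* index f with v g = u_f, where u_1 > u_2 > ... > u_t *)
definition value_rank :: "(nat \<Rightarrow> real) \<Rightarrow> nat \<Rightarrow> nat \<Rightarrow> nat" where
  "value_rank v m g = card {u \<in> v ` real_items m. v g \<le> u}"

definition edges :: "nat \<Rightarrow> nat \<Rightarrow> (nat \<Rightarrow> nat \<Rightarrow> real) \<Rightarrow> (nat \<times> (nat \<times> nat)) set" where
  "edges n m val = {(g, (i, c)). i \<in> agents n \<and> c \<in> buckets m \<and>
      ((g \<in> real_items m \<and> val i g > 0) \<or> g \<in> dummy_items n m)}"

definition edge_weight :: "nat \<Rightarrow> (nat \<Rightarrow> real) \<Rightarrow> nat \<times> (nat \<times> nat) \<Rightarrow> real" where
  "edge_weight m v e = (case e of (g, (i, c)) \<Rightarrow>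
      (if g \<in> real_items m
       then - (real m ^ (num_values v m - value_rank v m g)) * real c
       else 0))"

definition perfect_matching ::
  "('a \<times> 'b) set \<Rightarrow> 'a set \<Rightarrow> 'b set \<Rightarrow> ('a \<times> 'b) set \<Rightarrow> bool" where
  "perfect_matching E A B M \<longleftrightarrow> M \<subseteq> E \<and>
     (\<forall>a\<in>A. \<exists>!b. (a, b) \<in> M) \<and> (\<forall>b\<in>B. \<exists>!a. (a, b) \<in> M)"

definition max_weight_perfect_matching ::
  "('a \<times> 'b) set \<Rightarrow> 'a set \<Rightarrow> 'b set \<Rightarrow> ('a \<times> 'b \<Rightarrow> real) \<Rightarrow> ('a \<times> 'b) set \<Rightarrow> bool" where
  "max_weight_perfect_matching E A B w M \<longleftrightarrow> perfect_matching E A B M \<and>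
     (\<forall>M'. perfect_matching E A B M' \<longrightarrow> sum w M' \<le> sum w M)"

definition matched_to :: "('a \<times> 'b) set \<Rightarrow> 'b \<Rightarrow> 'a" where
  "matched_to M b = (THE a. (a, b) \<in> M)"

end

theory Submission
  imports Defs "HOL-Combinatorics.Permutations"
begin

text \<open>Write the weight of the edge \<open>(a_g, b_(i,c))\<close> as \<open>-priority g * c\<close>,
  where real items have priority \<open>m ^ (t - f)\<close> and dummies priority \<open>0\<close>. A rematching of
  \<open>M*\<close> along a permutation of right vertices changes the weight by
  \<open>\<Sum> priority (M* b) * (bucket b - bucket (p b))\<close>, which must be \<open>\<le> 0\<close>. Suppose agent \<open>i\<close>
  prefers the item \<open>h\<close> in slot \<open>(j, c+1)\<close> to its item \<open>g\<close> in slot \<open>(i, c)\<close>; then \<open>h\<close> is a real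
  item whose value class is strictly higher than that of \<open>g\<close>, so \<open>m * priority g \<le> priority h\<close>.
  If \<open>g\<close> may sit in slot \<open>(j, c+1)\<close>, swapping \<open>g\<close> and \<open>h\<close> gains \<open>priority h - priority g > 0\<close>.
  Otherwise \<open>i \<noteq> j\<close>, and since \<open>h\<close> is not among the at most \<open>m - 1\<close> other real items, some
  slot \<open>(i, c')\<close> holds a dummy; moving \<open>g\<close> to \<open>(i, c')\<close>, \<open>h\<close> to \<open>(i, c)\<close> and the dummy to
  \<open>(j, c+1)\<close> gains at least \<open>priority g > 0\<close>, because bucket indices differ by less than \<open>m\<close>.\<close>

lemma perfect_matchingD:
  assumes "perfect_matching E A B M"
  shows perfect_matching_subset: "M \<subseteq> E"
    and perfect_matching_left_unique: "a \<in> A \<Longrightarrow> \<exists>!b. (a, b) \<in> M"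
    and perfect_matching_right_unique: "b \<in> B \<Longrightarrow> \<exists>!a. (a, b) \<in> M"
  using assms unfolding perfect_matching_def by simp_all

lemma perfect_matching_matched_to:
  assumes "perfect_matching E A B M" "b \<in> B"
  shows "(matched_to M b, b) \<in> M"
  unfolding matched_to_def using perfect_matching_right_unique[OF assms] by (rule theI')

lemma perfect_matching_matched_to_eq:
  assumes "perfect_matching E A B M" "b \<in> B" "(a, b) \<in> M"
  shows "matched_to M b = a"
  unfolding matched_to_def using perfect_matching_right_unique[OF assms(1,2)] assms(3)
  by (rule the1_equality)

lemma perfect_matching_matched_to_edge:
  assumes "perfect_matching E A B M" "b \<in> B"
  shows "(matched_to M b, b) \<in> E"
  using perfect_matching_matched_to[OF assms] perfect_matching_subset[OF assms(1)] by blast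

lemma perfect_matching_inj_on_matched_to:
  assumes pm: "perfect_matching E A B M" and E: "E \<subseteq> A \<times> B"
  shows "inj_on (matched_to M) B"
proof (rule inj_onI)
  fix b b' assume b: "b \<in> B" and b': "b' \<in> B" and eq: "matched_to M b = matched_to M b'"
  let ?a = "matched_to M b"
  have ab: "(?a, b) \<in> M" and ab': "(?a, b') \<in> M"
    using perfect_matching_matched_to[OF pm] b b' eq by metis+
  have "?a \<in> A" using ab perfect_matching_subset[OF pm] E by blast
  then show "b = b'" using perfect_matching_left_unique[OF pm] ab ab' by blast
qed

lemma perfect_matching_rematch:
  assumes pm: "perfect_matching E A B M" and p: "p permutes S" and S: "S \<subseteq> B"
    and edge: "\<And>a b. (a, b) \<in> M \<Longrightarrow> (a, p b) \<in> E"
  shows "perfect_matching E A B ((\<lambda>(a, b). (a, p b)) ` M)"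
  unfolding perfect_matching_def
proof (intro conjI ballI)
  show "(\<lambda>(a, b). (a, p b)) ` M \<subseteq> E" using edge by auto
next
  fix a assume "a \<in> A"
  note uniq = perfect_matching_left_unique[OF pm this]
  then obtain b where ab: "(a, b) \<in> M" by blast
  show "\<exists>!b'. (a, b') \<in> (\<lambda>(a, b). (a, p b)) ` M"
  proof (rule ex1I)
    show "(a, p b) \<in> (\<lambda>(a, b). (a, p b)) ` M" using ab by force
  next
    fix b' assume "(a, b') \<in> (\<lambda>(a, b). (a, p b)) ` M"
    then obtain b1 where "(a, b1) \<in> M" "b' = p b1" by auto
    then show "b' = p b" using uniq ab by auto
  qed
next
  fix b assume "b \<in> B"
  then obtain b0 where b0: "b0 \<in> B" "b = p b0"
    using permutes_image[OF permutes_subset[OF p S]] by force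
  note uniq = perfect_matching_right_unique[OF pm b0(1)]
  then obtain a where ab0: "(a, b0) \<in> M" by blast
  show "\<exists>!a'. (a', b) \<in> (\<lambda>(a, b). (a, p b)) ` M"
  proof (rule ex1I)
    show "(a, b) \<in> (\<lambda>(a, b). (a, p b)) ` M" using ab0 b0(2) by force
  next
    fix a' assume "(a', b) \<in> (\<lambda>(a, b). (a, p b)) ` M"
    then obtain b1 where "(a', b1) \<in> M" "p b1 = p b0" using b0(2) by auto
    then show "a' = a" using uniq ab0 permutes_inj[OF p] by (auto dest: injD)
  qed
qed

lemma max_weight_perfect_matching_rematch_gain_nonpos:
  fixes M :: "('a \<times> 'b) set"
  assumes opt: "max_weight_perfect_matching E A B w M"
    and fin: "finite E"
    and p: "p permutes S" and S: "S \<subseteq> B"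
    and edge: "\<And>b. b \<in> S \<Longrightarrow> (matched_to M b, p b) \<in> E"
  shows "(\<Sum>b\<in>S. w (matched_to M b, p b) - w (matched_to M b, b)) \<le> 0"
proof -
  define f :: "'a \<times> 'b \<Rightarrow> 'a \<times> 'b" where "f = (\<lambda>(a, b). (a, p b))"
  let ?gain = "\<lambda>e. w (f e) - w e"
  have pm: "perfect_matching E A B M" using opt unfolding max_weight_perfect_matching_def by blast
  note ME = perfect_matching_subset[OF pm]
  have finM: "finite M" using ME fin by (rule finite_subset)
  have "(a, p b) \<in> E" if ab: "(a, b) \<in> M" for a b
  proof (cases "b \<in> S")
    case True
    then show ?thesis using edge perfect_matching_matched_to_eq[OF pm _ ab] S by auto
  next
    case False
    then show ?thesis using permutes_not_in[OF p] ME ab by auto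
  qed
  then have "perfect_matching E A B (f ` M)"
    unfolding f_def by (rule perfect_matching_rematch[OF pm p S])
  then have "sum w (f ` M) \<le> sum w M" using opt unfolding max_weight_perfect_matching_def by blast
  moreover have "sum w (f ` M) = sum (w \<circ> f) M"
    by (rule sum.reindex) (auto simp: f_def inj_on_def permutes_inj[OF p, THEN injD])
  ultimately have "(\<Sum>e\<in>M. ?gain e) \<le> 0" by (simp add: sum_subtractf)
  also have "(\<Sum>e\<in>M. ?gain e) = (\<Sum>e\<in>{e \<in> M. snd e \<in> S}. ?gain e)"
    using finM by (intro sum.mono_neutral_right) (auto simp: f_def, metis permutes_not_in[OF p])
  also have "{e \<in> M. snd e \<in> S} = (\<lambda>b. (matched_to M b, b)) ` S"
    using S perfect_matching_matched_to[OF pm] perfect_matching_matched_to_eq[OF pm] by force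
  also have "(\<Sum>e\<in>(\<lambda>b. (matched_to M b, b)) ` S. ?gain e)
      = (\<Sum>b\<in>S. w (matched_to M b, p b) - w (matched_to M b, b))"
    by (subst sum.reindex) (auto simp: inj_on_def f_def)
  finally show ?thesis .
qed

lemma edges_subset_sides: "edges n m val \<subseteq> left_side n m \<times> right_side n m"
  unfolding edges_def left_side_def right_side_def by auto

lemma finite_edges: "finite (edges n m val)"
  by (rule finite_subset[OF edges_subset_sides])
    (simp add: left_side_def right_side_def real_items_def dummy_items_def agents_def buckets_def)

definition priority :: "nat \<Rightarrow> (nat \<Rightarrow> real) \<Rightarrow> nat \<Rightarrow> real" where
  "priority m v g =
     (if g \<in> real_items m then real m ^ (num_values v m - value_rank v m g) else 0)"

lemma edge_weight_eq: "edge_weight m v (g, b) = - priority m v g * real (snd b)"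
  by (cases b) (simp add: edge_weight_def priority_def)

lemma priority_nonneg: "0 \<le> priority m v g"
  by (simp add: priority_def)

lemma priority_pos: "g \<in> real_items m \<Longrightarrow> 0 < priority m v g"
  by (simp add: priority_def real_items_def)

lemma priority_not_real: "g \<notin> real_items m \<Longrightarrow> priority m v g = 0"
  by (simp add: priority_def)

lemma value_rank_less:
  assumes "g \<in> real_items m" "v g < v h"
  shows "value_rank v m h < value_rank v m g"
proof -
  let ?V = "v ` real_items m"
  have "{u \<in> ?V. v h \<le> u} \<subset> {u \<in> ?V. v g \<le> u}"
    using assms by force
  then show ?thesis
    unfolding value_rank_def by (rule psubset_card_mono[rotated]) (simp add: real_items_def)
qed

lemma value_rank_le_num_values: "value_rank v m g \<le> num_values v m"
  unfolding value_rank_def num_values_def by (rule card_mono) (auto simp: real_items_def)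

lemma priority_ge_of_value_less:
  assumes g: "g \<in> real_items m" and h: "h \<in> real_items m" and less: "v g < v h"
  shows "real m * priority m v g \<le> priority m v h"
proof -
  have "Suc (num_values v m - value_rank v m g) \<le> num_values v m - value_rank v m h"
    using value_rank_less[OF g less] value_rank_le_num_values[of v m g] by linarith
  moreover have "1 \<le> real m" using g by (simp add: real_items_def)
  ultimately show ?thesis
    using g h by (simp add: priority_def power_increasing flip: power_Suc)
qed

lemma adjacent_slots_in_right_side:
  assumes "i \<in> agents n" "j \<in> agents n" "c \<in> {1..m-1}"
  shows "(i, c) \<in> right_side n m" "(j, c + 1) \<in> right_side n m"
  using assms by (auto simp: right_side_def buckets_def)

locale max_weight_bucket_matching =
  fixes n m :: nat and v :: "nat \<Rightarrow> real" and val :: "nat \<Rightarrow> nat \<Rightarrow> real"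
    and M :: "(nat \<times> (nat \<times> nat)) set"
  assumes restricted: "\<And>i g. i \<in> agents n \<Longrightarrow> g \<in> real_items m \<Longrightarrow> val i g = 0 \<or> val i g = v g"
    and dummy_zero: "\<And>i g. i \<in> agents n \<Longrightarrow> g \<in> dummy_items n m \<Longrightarrow> val i g = 0"
    and opt: "max_weight_perfect_matching (edges n m val) (left_side n m) (right_side n m)
      (edge_weight m v) M"
begin

lemma perfect: "perfect_matching (edges n m val) (left_side n m) (right_side n m) M"
  using opt by (simp add: max_weight_perfect_matching_def)

lemma matched_edge: "b \<in> right_side n m \<Longrightarrow> (matched_to M b, b) \<in> edges n m val"
  by (rule perfect_matching_matched_to_edge[OF perfect])

lemma rematch_gain_nonpos:
  assumes p: "p permutes S" and S: "S \<subseteq> right_side n m"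
    and edge: "\<And>b. b \<in> S \<Longrightarrow> (matched_to M b, p b) \<in> edges n m val"
  shows "(\<Sum>b\<in>S. priority m v (matched_to M b) * (real (snd b) - real (snd (p b)))) \<le> 0"
  using max_weight_perfect_matching_rematch_gain_nonpos[OF opt finite_edges p S edge]
  by (simp add: edge_weight_eq right_diff_distrib)

lemma exchange:
  assumes b: "b1 \<in> right_side n m" "b2 \<in> right_side n m" "b1 \<noteq> b2"
    and edge: "(matched_to M b1, b2) \<in> edges n m val" "(matched_to M b2, b1) \<in> edges n m val"
  shows "(priority m v (matched_to M b1) - priority m v (matched_to M b2))
           * (real (snd b1) - real (snd b2)) \<le> 0"
proof -
  have "(\<Sum>b\<in>{b1, b2}. priority m v (matched_to M b)
          * (real (snd b) - real (snd (transpose b1 b2 b)))) \<le> 0"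
    using b edge by (intro rematch_gain_nonpos[OF permutes_swap_id]) auto
  then show ?thesis using b(3) by (simp add: algebra_simps)
qed

lemma rotation:
  assumes b: "b1 \<in> right_side n m" "b2 \<in> right_side n m" "b3 \<in> right_side n m"
      "b1 \<noteq> b2" "b1 \<noteq> b3" "b2 \<noteq> b3"
    and edge: "(matched_to M b1, b3) \<in> edges n m val" "(matched_to M b2, b1) \<in> edges n m val"
      "(matched_to M b3, b2) \<in> edges n m val"
  shows "priority m v (matched_to M b1) * (real (snd b1) - real (snd b3))
       + priority m v (matched_to M b2) * (real (snd b2) - real (snd b1))
       + priority m v (matched_to M b3) * (real (snd b3) - real (snd b2)) \<le> 0"
proof -
  let ?p = "transpose b1 b2 \<circ> transpose b1 b3"
  have p: "?p permutes {b1, b2, b3}"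
    by (intro permutes_compose permutes_swap_id) auto
  have "(\<Sum>b\<in>{b1, b2, b3}. priority m v (matched_to M b)
          * (real (snd b) - real (snd (?p b)))) \<le> 0"
    using b edge by (intro rematch_gain_nonpos[OF p]) auto
  then show ?thesis using b(4-6) by (simp add: algebra_simps)
qed

lemma exists_bucket_matched_to_non_real:
  assumes i: "i \<in> agents n" and h: "h \<in> real_items m" and hb: "(h, b) \<in> M" "fst b \<noteq> i"
  shows "\<exists>c \<in> buckets m. matched_to M (i, c) \<notin> real_items m"
proof (rule ccontr)
  assume "\<not> ?thesis"
  then have real: "matched_to M (i, c) \<in> real_items m" if "c \<in> buckets m" for c
    using that by blast
  have slots: "Pair i ` buckets m \<subseteq> right_side n m"
    using i by (auto simp: right_side_def)
  have "inj_on (matched_to M \<circ> Pair i) (buckets m)"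
    using inj_on_subset[OF perfect_matching_inj_on_matched_to[OF perfect edges_subset_sides] slots]
    by (intro comp_inj_on) (auto simp: inj_on_def)
  moreover have "(matched_to M \<circ> Pair i) ` buckets m \<subseteq> real_items m - {h}"
  proof clarsimp
    fix c assume c: "c \<in> buckets m"
    have "(i, c) \<in> right_side n m" using slots c by blast
    note ic = perfect_matching_matched_to[OF perfect this]
    have "h \<in> left_side n m" using h by (simp add: left_side_def)
    then have "matched_to M (i, c) \<noteq> h"
      using perfect_matching_left_unique[OF perfect] ic hb by fastforce
    then show "matched_to M (i, c) \<in> real_items m \<and> matched_to M (i, c) \<noteq> h"
      using real c by blast
  qed
  ultimately have "card (buckets m) \<le> card (real_items m - {h})"
    by (rule card_inj_on_le) (simp add: real_items_def)
  then show False using h by (simp add: buckets_def real_items_def)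
qed

lemma priority_gap_of_val_less:
  assumes slots: "(i, c) \<in> right_side n m" "b \<in> right_side n m"
    and less: "val i (matched_to M (i, c)) < val i (matched_to M b)"
  shows "matched_to M b \<in> real_items m" and "0 < val i (matched_to M b)"
    and "real m * priority m v (matched_to M (i, c)) \<le> priority m v (matched_to M b)"
proof -
  define g h where "g = matched_to M (i, c)" and "h = matched_to M b"
  have g: "(g, (i, c)) \<in> edges n m val" and h: "h \<in> left_side n m"
    using matched_edge[OF slots(1)] matched_edge[OF slots(2)] edges_subset_sides
    by (auto simp: g_def h_def)
  have i: "i \<in> agents n" using g by (simp add: edges_def)
  have g_real: "val i g = v g" if "g \<in> real_items m"
    using g restricted[OF i that] that by (auto simp: edges_def real_items_def dummy_items_def)
  have "0 \<le> val i g" using g dummy_zero[OF i] by (force simp: edges_def)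
  then show h_real: "h \<in> real_items m" and h_pos: "0 < val i h"
    using h less dummy_zero[OF i, of h] by (auto simp: left_side_def g_def h_def)
  show "real m * priority m v g \<le> priority m v h"
  proof (cases "g \<in> real_items m")
    case True
    have "val i h = v h" using restricted[OF i h_real] h_pos by auto
    then show ?thesis
      using priority_ge_of_value_less[OF True h_real] less g_real[OF True] by (simp add: g_def h_def)
  qed (simp add: priority_not_real priority_nonneg)
qed

lemma val_ge_next_bucket_if_exchangeable:
  assumes i: "i \<in> agents n" and j: "j \<in> agents n" and c: "c \<in> {1..m-1}"
    and exchangeable: "matched_to M (i, c) \<notin> real_items m \<or> 0 < val j (matched_to M (i, c))"
  shows "val i (matched_to M (j, c + 1)) \<le> val i (matched_to M (i, c))"
proof (rule ccontr)
  define g h where "g = matched_to M (i, c)" and "h = matched_to M (j, c + 1)"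
  note slots = adjacent_slots_in_right_side[OF i j c]
  assume "\<not> ?thesis"
  then have gap: "h \<in> real_items m" "0 < val i h" "real m * priority m v g \<le> priority m v h"
    using priority_gap_of_val_less[OF slots] by (simp_all add: g_def h_def)
  have "(h, (i, c)) \<in> edges n m val" "(g, (j, c + 1)) \<in> edges n m val"
    using gap exchangeable matched_edge[OF slots(1)] matched_edge[OF slots(2)] i
    by (auto simp: edges_def g_def h_def)
  then have "priority m v h \<le> priority m v g"
    using exchange[OF slots] by (simp add: g_def h_def)
  moreover have "2 * priority m v g \<le> real m * priority m v g"
    using c priority_nonneg[of m v g] by (intro mult_right_mono) auto
  ultimately show False using gap(3) priority_pos[OF gap(1), where v = v] by linarith
qed

lemma val_ge_next_bucket_if_not_exchangeable:
  assumes i: "i \<in> agents n" and j: "j \<in> agents n" and c: "c \<in> {1..m-1}"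
    and g_real: "matched_to M (i, c) \<in> real_items m"
    and not_exchangeable: "\<not> 0 < val j (matched_to M (i, c))"
  shows "val i (matched_to M (j, c + 1)) \<le> val i (matched_to M (i, c))"
proof (rule ccontr)
  define g h where "g = matched_to M (i, c)" and "h = matched_to M (j, c + 1)"
  note slots = adjacent_slots_in_right_side[OF i j c]
  assume "\<not> ?thesis"
  then have gap: "h \<in> real_items m" "0 < val i h" "real m * priority m v g \<le> priority m v h"
    using priority_gap_of_val_less[OF slots] by (simp_all add: g_def h_def)
  have "0 < val i g" using matched_edge[OF slots(1)] g_real
    by (auto simp: edges_def real_items_def dummy_items_def g_def)
  then have "j \<noteq> i" using not_exchangeable by (auto simp: g_def)
  moreover have "(h, (j, c + 1)) \<in> M"
    unfolding h_def by (rule perfect_matching_matched_to[OF perfect slots(2)])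
  ultimately obtain c' where c': "c' \<in> buckets m"
    and d_real: "matched_to M (i, c') \<notin> real_items m"
    using exists_bucket_matched_to_non_real[OF i gap(1)] by force
  have slot': "(i, c') \<in> right_side n m" using i c' by (simp add: right_side_def)
  have "(matched_to M (i, c'), (j, c + 1)) \<in> edges n m val"
    using matched_edge[OF slot'] d_real j c by (auto simp: edges_def buckets_def)
  moreover have "(g, (i, c')) \<in> edges n m val" "(h, (i, c)) \<in> edges n m val"
    using \<open>0 < val i g\<close> g_real i c c' gap(1,2) by (auto simp: edges_def buckets_def g_def)
  moreover have "(i, c) \<noteq> (i, c')" using g_real d_real by auto
  ultimately have "priority m v g * real c + priority m v h \<le> priority m v g * real c'"
    using rotation[OF slots slot'] \<open>j \<noteq> i\<close> d_real
    by (simp add: g_def h_def priority_not_real algebra_simps)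
  moreover have "priority m v g * real c' \<le> real m * priority m v g"
    using c' priority_nonneg[of m v g] by (subst mult.commute, intro mult_left_mono) (auto simp: buckets_def)
  moreover have "priority m v g \<le> priority m v g * real c"
    using c priority_nonneg[of m v g] by (simp add: mult_le_cancel_left1)
  ultimately show False using gap(3) priority_pos[OF g_real[folded g_def], where v = v] by linarith
qed

end

theorem mainTheorem9:
  fixes n m :: nat
    and v :: "nat \<Rightarrow> real"
    and val :: "nat \<Rightarrow> nat \<Rightarrow> real"
    and Mstar :: "(nat \<times> (nat \<times> nat)) set"
  assumes v_pos: "\<And>g. g \<in> real_items m \<Longrightarrow> v g > 0"
    and restricted: "\<And>i g. i \<in> agents n \<Longrightarrow> g \<in> real_items m \<Longrightarrow> val i g = 0 \<or> val i g = v g"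
    and dummy_zero: "\<And>i g. i \<in> agents n \<Longrightarrow> g \<in> dummy_items n m \<Longrightarrow> val i g = 0"
    and valued: "\<And>g. g \<in> real_items m \<Longrightarrow> \<exists>i \<in> agents n. val i g > 0"
    and opt: "max_weight_perfect_matching (edges n m val) (left_side n m) (right_side n m)
               (edge_weight m v) Mstar"
    and i: "i \<in> agents n" and j: "j \<in> agents n"
    and c: "c \<in> {1..m-1}"
  shows "val i (matched_to Mstar (i, c)) \<ge> val i (matched_to Mstar (j, c + 1))"
proof -
  interpret max_weight_bucket_matching n m v val Mstar
    using restricted dummy_zero opt by unfold_locales
  show ?thesis
  proof (cases "matched_to Mstar (i, c) \<notin> real_items m \<or> 0 < val j (matched_to Mstar (i, c))")
    case True
    then show ?thesis by (rule val_ge_next_bucket_if_exchangeable[OF i j c])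
  next
    case False
    then show ?thesis using val_ge_next_bucket_if_not_exchangeable[OF i j c] by blast
  qed
qed

end
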